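(* In the affine setting described in the context, fix a base point $\eta\in A$. Then the linear span of $\{\beta_{\zeta,\eta}:\zeta\in A\}$ (each regarded, via its canonical extension, as a function on $\hat{Q}$) is dense in $\mathrm{L}^2(\hat{Q},\nu_Q)$.
   Context: $A$ is a real affine space over the vector space $L$. $\theta:A\times L\to\mathbb{R}$ is linear in the second argument and there is a bilinear $[\cdot,\cdot]:L\times L\to\mathbb{R}$ with $\theta(\eta+\xi,\tau)=\theta(\eta,\tau)+[\xi,\tau]$; $\omega(\xi,\xi')=\frac12[\xi,\xi']-\frac12[\xi',\xi]$ is non-degenerate. $M=\{\tau:[\xi,\tau]=0\ \forall\xi\in L\}$, $N=\{\tau:[\tau,\xi]=0\ \forall\xi\in L\}$, $L=M\oplus N$ assumed, $Q=L/M$ with quotient map $q$; $[\cdot,\cdot]$ descends to $L\times Q\to\mathbb{R}$. $\Omega:Q\times Q\to\mathbb{C}$ is symmetric bilinear with positive definite real part and admissible: $Q$ with inner product $\Re\Omega$ is a separable real Hilbert space, $\Im\Omega$ is continuous, each $\phi\mapsto[\xi,\phi]$ ($\xi\in L$) is continuous on $Q$, and every continuous linear functional on $Q$ has this form. $\hat{Q}$ is the algebraic dual of the topological dual $Q^*$, containing $Q$ canonically, with the initial topology of the evaluations at elements of $Q^*$; $\nu_Q$ is the Gaussian probability measure on $\hat{Q}$ with $\int\exp(\mathrm{i}x(\ell))\,\mathrm{d}\nu_Q(x)=\exp(-\frac14\|\ell\|^2)$ for $\ell\in Q^*$. For $\zeta,\eta\in A$, $\beta_{\zeta,\eta}$ is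 the continuous function on $Q$ $$\beta_{\zeta,\eta}(\phi)=\exp\Big(\mathrm{i}\theta(\zeta,\eta-\zeta)-\tfrac12\Omega(q(\eta-\zeta),q(\eta-\zeta))-\mathrm{i}[\eta-\zeta,\phi]-\Omega(q(\eta-\zeta),\phi)\Big),$$ extended canonically to a continuous function on $\hat{Q}$ (it depends on $\phi$ only through finitely many continuous linear functionals, hence factors through a finite-dimensional quotient of $Q$, which is also a quotient of $\hat{Q}$). $\beta_{\zeta,\eta}$ is the $\eta$-reduced Schrödinger wave function of the affine coherent state associated with $\zeta$. *)

theory Defs
  imports "HOL-Analysis.Analysis" "HOL-Probability.Probability"
begin

definition affine_action :: "('a \<Rightarrow> 'l::real_vector \<Rightarrow> 'a) \<Rightarrow> bool" where
  "affine_action vadd \<longleftrightarrow>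
     (\<forall>p. vadd p 0 = p) \<and>
     (\<forall>p u v. vadd (vadd p u) v = vadd p (u + v)) \<and>
     (\<forall>p p'. \<exists>!u. vadd p u = p')"

(* Difference vector: vsub vadd eta zeta is the unique u with zeta + u = eta, i.e. eta - zeta. *)
definition vsub :: "('a \<Rightarrow> 'l::real_vector \<Rightarrow> 'a) \<Rightarrow> 'a \<Rightarrow> 'a \<Rightarrow> 'l" where
  "vsub vadd eta zeta = (THE u. vadd zeta u = eta)"

definition Mset :: "('l \<Rightarrow> 'l \<Rightarrow> real) \<Rightarrow> 'l set" where
  "Mset br = {\<tau>. \<forall>\<xi>. br \<xi> \<tau> = 0}"

definition Nset :: "('l \<Rightarrow> 'l \<Rightarrow> real) \<Rightarrow> 'l set" where
  "Nset br = {\<tau>. \<forall>\<xi>. br \<tau> \<xi> = 0}"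

definition omega :: "('l \<Rightarrow> 'l \<Rightarrow> real) \<Rightarrow> 'l \<Rightarrow> 'l \<Rightarrow> real" where
  "omega br \<xi> \<xi>' = br \<xi> \<xi>' / 2 - br \<xi>' \<xi> / 2"

(* The bracket descended to L x Q (well defined since ker q = M). *)
definition brQ :: "('l \<Rightarrow> 'l \<Rightarrow> real) \<Rightarrow> ('l \<Rightarrow> 'q) \<Rightarrow> 'l \<Rightarrow> 'q \<Rightarrow> real" where
  "brQ br q \<xi> \<phi> = br \<xi> (SOME \<tau>. q \<tau> = \<phi>)"

(* Qhat: algebraic dual of the topological dual Q* (here Q* = 'q \<Rightarrow>_L real). *)
definition Qhat :: "(('q::real_normed_vector \<Rightarrow>\<^sub>L real) \<Rightarrow> real) set" where
  "Qhat = {x. linear x}"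

definition embQ :: "'q::real_normed_vector \<Rightarrow> (('q \<Rightarrow>\<^sub>L real) \<Rightarrow> real)" where
  "embQ \<phi> = (\<lambda>l. blinfun_apply l \<phi>)"

definition Qhat_cyl :: "(('q::real_normed_vector \<Rightarrow>\<^sub>L real) \<Rightarrow> real) set set" where
  "Qhat_cyl = {{x \<in> Qhat. x l \<in> B} | l B. B \<in> sets borel}"

definition betaQ ::
  "('a \<Rightarrow> 'l::real_vector \<Rightarrow> 'a) \<Rightarrow> ('a \<Rightarrow> 'l \<Rightarrow> real) \<Rightarrow> ('l \<Rightarrow> 'l \<Rightarrow> real)
   \<Rightarrow> ('l \<Rightarrow> 'q) \<Rightarrow> ('q \<Rightarrow> 'q \<Rightarrow> complex) \<Rightarrow> 'a \<Rightarrow> 'a \<Rightarrow> 'q \<Rightarrow> complex" where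
  "betaQ vadd \<theta> br q \<Omega> \<zeta> \<eta> \<phi> =
     (let u = vsub vadd \<eta> \<zeta>; v = q u in
      exp (\<i> * of_real (\<theta> \<zeta> u) - \<Omega> v v / 2 - \<i> * of_real (brQ br q u \<phi>) - \<Omega> v \<phi>))"

(* Canonical extension of beta_{zeta,eta} to Qhat: beta depends on phi only through
  the continuous linear functionals phi |-> [eta-zeta, phi], phi |-> Re Omega(v,phi) = <v,phi>
  and phi |-> Im Omega(v,phi); on Qhat these are replaced by evaluation of x at them. *)
definition betahat ::
  "('a \<Rightarrow> 'l::real_vector \<Rightarrow> 'a) \<Rightarrow> ('a \<Rightarrow> 'l \<Rightarrow> real) \<Rightarrow> ('l \<Rightarrow> 'l \<Rightarrow> real)
   \<Rightarrow> ('l \<Rightarrow> 'q::real_inner) \<Rightarrow> ('q \<Rightarrow> 'q \<Rightarrow> complex) \<Rightarrow> 'a \<Rightarrow> 'a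
   \<Rightarrow> (('q \<Rightarrow>\<^sub>L real) \<Rightarrow> real) \<Rightarrow> complex" where
  "betahat vadd \<theta> br q \<Omega> \<zeta> \<eta> x =
     (let u = vsub vadd \<eta> \<zeta>; v = q u in
      exp (\<i> * of_real (\<theta> \<zeta> u) - \<Omega> v v / 2
           - \<i> * of_real (x (Blinfun (brQ br q u)))
           - (of_real (x (Blinfun (\<lambda>\<phi>. inner v \<phi>)))
              + \<i> * of_real (x (Blinfun (\<lambda>\<phi>. Im (\<Omega> v \<phi>)))))))"

end

theory Submission
  imports Defs
begin

text \<open>
  For \<open>l \<in> Q\<^sup>*\<close> pick \<open>m \<in> M\<close> with \<open>[m, \<cdot>] = -l\<close> on \<open>Q\<close> (every continuous functional is a bracket,
  and the \<open>N\<close>-part of a vector brackets trivially) and put \<open>\<zeta> = \<eta> - m\<close>. Since \<open>q (\<eta> - \<zeta>) = 0\<close>, all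
  \<open>\<Omega>\<close>-dependent factors drop out and \<open>\<beta>\<^sub>\<zeta>\<^sub>,\<^sub>\<eta>\<close> is a unimodular multiple of the character
  \<open>x \<mapsto> exp (i x(l))\<close>. Indicators of half-spaces
  \<open>{x(l) \<le> a}\<close> are approximated by one-dimensional trigonometric polynomials (Stone-Weierstrass on
  the circle after rescaling), finite intersections by products of uniformly bounded approximants,
  all measurable sets by a Dynkin argument, and all of \<open>L\<^sup>2\<close> by simple functions.
\<close>

section \<open>Approximation in \<open>L\<^sup>2\<close> by a class of test functions\<close>

lemma norm_add_sq_le:
  fixes a b :: "'a::real_normed_vector"
  shows "(norm (a + b))\<^sup>2 \<le> 2 * (norm a)\<^sup>2 + 2 * (norm b)\<^sup>2"
proof -
  have "(norm (a + b))\<^sup>2 \<le> (norm a + norm b)\<^sup>2"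
    by (simp add: norm_triangle_ineq power_mono)
  also have "\<dots> \<le> 2 * (norm a)\<^sup>2 + 2 * (norm b)\<^sup>2"
    using zero_le_power2[of "norm a - norm b"] by (simp add: power2_diff power2_sum)
  finally show ?thesis .
qed

lemma (in finite_measure) ex_measure_decseq_less:
  assumes "range B \<subseteq> sets M" "decseq B" "(\<Inter>n. B n) = {}" "e > 0"
  shows "\<exists>n. measure M (B n) < e"
proof -
  have "(\<lambda>n. measure M (B n)) \<longlonglongrightarrow> measure M (\<Inter>n. B n)"
    using assms(1,2) by (rule finite_Lim_measure_decseq)
  then have "(\<lambda>n. measure M (B n)) \<longlonglongrightarrow> 0"
    using assms(3) by simp
  from order_tendstoD(2)[OF this assms(4)] show ?thesis
    by (meson eventually_sequentially order.refl)
qed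

lemma (in finite_measure) integrable_sq_norm_add:
  fixes f g :: "'a \<Rightarrow> 'b::{real_normed_vector, second_countable_topology}"
  assumes "f \<in> borel_measurable M" "g \<in> borel_measurable M"
    and "integrable M (\<lambda>x. (norm (f x))\<^sup>2)" "integrable M (\<lambda>x. (norm (g x))\<^sup>2)"
  shows "integrable M (\<lambda>x. (norm (f x + g x))\<^sup>2)"
    and "(\<integral>x. (norm (f x + g x))\<^sup>2 \<partial>M) \<le> 2 * (\<integral>x. (norm (f x))\<^sup>2 \<partial>M) + 2 * (\<integral>x. (norm (g x))\<^sup>2 \<partial>M)"
proof -
  have bound: "integrable M (\<lambda>x. 2 * (norm (f x))\<^sup>2 + 2 * (norm (g x))\<^sup>2)"
    using assms(3,4) by auto
  show int: "integrable M (\<lambda>x. (norm (f x + g x))\<^sup>2)"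
    by (rule Bochner_Integration.integrable_bound[OF bound]) (use assms(1,2) norm_add_sq_le in auto)
  have "(\<integral>x. (norm (f x + g x))\<^sup>2 \<partial>M) \<le> (\<integral>x. 2 * (norm (f x))\<^sup>2 + 2 * (norm (g x))\<^sup>2 \<partial>M)"
    by (rule integral_mono[OF int bound]) (rule norm_add_sq_le)
  then show "(\<integral>x. (norm (f x + g x))\<^sup>2 \<partial>M) \<le> 2 * (\<integral>x. (norm (f x))\<^sup>2 \<partial>M) + 2 * (\<integral>x. (norm (g x))\<^sup>2 \<partial>M)"
    using assms(3,4) by simp
qed

locale l2_approx = prob_space M for M :: "'x measure" +
  fixes T :: "('x \<Rightarrow> complex) set"
  assumes measurable_T: "p \<in> T \<Longrightarrow> p \<in> borel_measurable M"
    and add_T: "p \<in> T \<Longrightarrow> p' \<in> T \<Longrightarrow> (\<lambda>x. p x + p' x) \<in> T"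
    and scale_T: "p \<in> T \<Longrightarrow> (\<lambda>x. c * p x) \<in> T"
    and one_T: "(\<lambda>x. 1) \<in> T"
begin

definition approximable :: "('x \<Rightarrow> complex) \<Rightarrow> bool" where
  "approximable g \<longleftrightarrow> (\<forall>e>0. \<exists>p\<in>T. integrable M (\<lambda>x. (cmod (g x - p x))\<^sup>2) \<and>
                                   (\<integral>x. (cmod (g x - p x))\<^sup>2 \<partial>M) < e)"

lemma zero_T: "(\<lambda>x. 0) \<in> T"
  using scale_T[OF one_T, of 0] by simp

lemma approximable_T: "p \<in> T \<Longrightarrow> approximable p"
  unfolding approximable_def by force

lemma approximable_trans:
  assumes g: "g \<in> borel_measurable M"
    and near: "\<And>e. e > 0 \<Longrightarrow> \<exists>h\<in>borel_measurable M. approximable h \<and>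
                 integrable M (\<lambda>x. (cmod (g x - h x))\<^sup>2) \<and> (\<integral>x. (cmod (g x - h x))\<^sup>2 \<partial>M) < e"
  shows "approximable g"
  unfolding approximable_def
proof (intro allI impI)
  fix e :: real assume "e > 0"
  then obtain h where h: "h \<in> borel_measurable M" "approximable h"
    "integrable M (\<lambda>x. (cmod (g x - h x))\<^sup>2)" "(\<integral>x. (cmod (g x - h x))\<^sup>2 \<partial>M) < e/4"
    using near[of "e/4"] by auto
  obtain p where p: "p \<in> T" "integrable M (\<lambda>x. (cmod (h x - p x))\<^sup>2)"
    "(\<integral>x. (cmod (h x - p x))\<^sup>2 \<partial>M) < e/4"
    using h(2) \<open>e > 0\<close> unfolding approximable_def by (meson divide_pos_pos zero_less_numeral)
  have split: "g x - p x = (g x - h x) + (h x - p x)" for x by simp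
  have "(\<lambda>x. g x - h x) \<in> borel_measurable M" "(\<lambda>x. h x - p x) \<in> borel_measurable M"
    using g h(1) measurable_T[OF p(1)] by auto
  note sum = integrable_sq_norm_add[OF this h(3) p(2), folded split]
  show "\<exists>p\<in>T. integrable M (\<lambda>x. (cmod (g x - p x))\<^sup>2) \<and> (\<integral>x. (cmod (g x - p x))\<^sup>2 \<partial>M) < e"
    using p(1) sum h(4) p(3) by (intro bexI[of _ p]) auto
qed

lemma approximable_cong:
  assumes "approximable g" "\<And>x. x \<in> space M \<Longrightarrow> g x = h x"
  shows "approximable h"
proof -
  have "integrable M (\<lambda>x. (cmod (h x - p x))\<^sup>2) = integrable M (\<lambda>x. (cmod (g x - p x))\<^sup>2)"
    and "(\<integral>x. (cmod (h x - p x))\<^sup>2 \<partial>M) = (\<integral>x. (cmod (g x - p x))\<^sup>2 \<partial>M)" for p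
    using assms(2) by (auto intro!: Bochner_Integration.integrable_cong Bochner_Integration.integral_cong)
  then show ?thesis
    using assms(1) unfolding approximable_def by simp
qed

lemma approximable_add:
  assumes "g \<in> borel_measurable M" "h \<in> borel_measurable M" "approximable g" "approximable h"
  shows "approximable (\<lambda>x. g x + h x)"
  unfolding approximable_def
proof (intro allI impI)
  fix e :: real assume "e > 0"
  obtain p where p: "p \<in> T" "integrable M (\<lambda>x. (cmod (g x - p x))\<^sup>2)"
    "(\<integral>x. (cmod (g x - p x))\<^sup>2 \<partial>M) < e/4"
    using assms(3) \<open>e > 0\<close> unfolding approximable_def by (meson divide_pos_pos zero_less_numeral)
  obtain p' where p': "p' \<in> T" "integrable M (\<lambda>x. (cmod (h x - p' x))\<^sup>2)"
    "(\<integral>x. (cmod (h x - p' x))\<^sup>2 \<partial>M) < e/4"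
    using assms(4) \<open>e > 0\<close> unfolding approximable_def by (meson divide_pos_pos zero_less_numeral)
  have split: "g x + h x - (p x + p' x) = (g x - p x) + (h x - p' x)" for x by simp
  have "(\<lambda>x. g x - p x) \<in> borel_measurable M" "(\<lambda>x. h x - p' x) \<in> borel_measurable M"
    using assms(1,2) measurable_T[OF p(1)] measurable_T[OF p'(1)] by auto
  note sum = integrable_sq_norm_add[OF this p(2) p'(2), folded split]
  show "\<exists>r\<in>T. integrable M (\<lambda>x. (cmod (g x + h x - r x))\<^sup>2) \<and> (\<integral>x. (cmod (g x + h x - r x))\<^sup>2 \<partial>M) < e"
    using add_T[OF p(1) p'(1)] sum p(3) p'(3) by (intro bexI[of _ "\<lambda>x. p x + p' x"]) auto
qed

lemma approximable_scale:
  assumes "approximable g"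
  shows "approximable (\<lambda>x. c * g x)"
  unfolding approximable_def
proof (intro allI impI)
  fix e :: real assume "e > 0"
  define C where "C = (cmod c)\<^sup>2 + 1"
  have C: "C > 0" "(cmod c)\<^sup>2 \<le> C" unfolding C_def by (auto simp: add_nonneg_pos)
  obtain p where p: "p \<in> T" "integrable M (\<lambda>x. (cmod (g x - p x))\<^sup>2)"
    "(\<integral>x. (cmod (g x - p x))\<^sup>2 \<partial>M) < e / C"
    using assms \<open>e > 0\<close> C(1) unfolding approximable_def by (meson divide_pos_pos)
  have eq: "(cmod (c * g x - c * p x))\<^sup>2 = (cmod c)\<^sup>2 * (cmod (g x - p x))\<^sup>2" for x
    by (simp add: norm_mult power_mult_distrib flip: right_diff_distrib)
  have "(cmod c)\<^sup>2 * (\<integral>x. (cmod (g x - p x))\<^sup>2 \<partial>M) \<le> C * (\<integral>x. (cmod (g x - p x))\<^sup>2 \<partial>M)"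
    using C(2) by (intro mult_right_mono) auto
  also have "\<dots> < e"
    using p(3) C(1) by (simp add: pos_less_divide_eq mult.commute)
  finally show "\<exists>r\<in>T. integrable M (\<lambda>x. (cmod (c * g x - r x))\<^sup>2) \<and> (\<integral>x. (cmod (c * g x - r x))\<^sup>2 \<partial>M) < e"
    using p(1,2) scale_T[OF p(1), of c] by (intro bexI[of _ "\<lambda>x. c * p x"]) (auto simp: eq)
qed

lemma approximable_sum:
  assumes "finite I" "\<And>i. i \<in> I \<Longrightarrow> approximable (G i)" "\<And>i. i \<in> I \<Longrightarrow> G i \<in> borel_measurable M"
  shows "approximable (\<lambda>x. \<Sum>i\<in>I. G i x)"
  using assms
proof (induction I rule: finite_induct)
  case empty
  then show ?case using approximable_T[OF zero_T] by simp
next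
  case (insert i I)
  then have "approximable (\<lambda>x. G i x + (\<Sum>i\<in>I. G i x))"
    by (intro approximable_add) auto
  then show ?case using insert by simp
qed

lemma approximable_indicator_sigma:
  assumes G: "Int_stable G" "G \<subseteq> Pow (space M)" "sets M = sigma_sets (space M) G"
    and base: "\<And>A. A \<in> G \<Longrightarrow> approximable (indicator A)"
    and A: "A \<in> sets M"
  shows "approximable (indicator A)"
proof -
  from A G(3) have "A \<in> sigma_sets (space M) G" by simp
  from G(1,2) this show ?thesis
  proof (induction rule: sigma_sets_induct_disjoint)
    case (basic A)
    then show ?case by (rule base)
  next
    case empty
    then show ?case using approximable_T[OF zero_T] by simp
  next
    case (compl A)
    then have "A \<in> sets M" using G(3) by simp
    then have "approximable (\<lambda>x. 1 + (-1) * indicator A x)"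
      by (intro approximable_add approximable_scale approximable_T[OF one_T] compl.IH) auto
    then show ?case by (rule approximable_cong) (auto simp: indicator_def)
  next
    case (union A)
    have A: "\<And>i. A i \<in> sets M" using union.hyps(2) G(3) by auto
    define U where "U = (\<Union>i. A i)"
    define V where "V n = (\<Union>i<n. A i)" for n
    have U: "U \<in> sets M" and V: "\<And>n. V n \<in> sets M"
      unfolding U_def V_def using A by auto
    have approx_V: "approximable (indicator (V n))" for n
    proof -
      have "approximable (\<lambda>x. \<Sum>i<n. indicator (A i) x)"
        using union.IH A by (intro approximable_sum) auto
      then show ?thesis
        unfolding V_def
        by (rule approximable_cong)
          (use union.hyps(1) in \<open>simp add: indicator_UN_disjoint[of "{..<n}"] disjoint_family_on_mono[of "{..<n}" UNIV]\<close>)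
    qed
    have dist_V: "(\<lambda>x. (cmod (indicator U x - indicator (V n) x :: complex))\<^sup>2) = indicator (U - V n)" for n
      by (auto simp: U_def V_def indicator_def fun_eq_iff)
    have small: "\<exists>n. measure M (U - V n) < e" if "e > 0" for e
      using U V that by (intro ex_measure_decseq_less) (auto simp: decseq_def U_def V_def)
    show ?case
      unfolding U_def[symmetric]
    proof (rule approximable_trans)
      fix e :: real assume "e > 0"
      then obtain n where "measure M (U - V n) < e" using small by blast
      then show "\<exists>h\<in>borel_measurable M. approximable h \<and>
          integrable M (\<lambda>x. (cmod (indicator U x - h x))\<^sup>2) \<and> (\<integral>x. (cmod (indicator U x - h x))\<^sup>2 \<partial>M) < e"
        using U V approx_V[of n]
        by (intro bexI[of _ "indicator (V n)"]) (auto simp: dist_V less_top[symmetric])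
    qed (use U in simp)
  qed
qed

lemma approximable_simple_function:
  assumes indicators: "\<And>A. A \<in> sets M \<Longrightarrow> approximable (indicator A)"
    and F: "simple_function M F"
  shows "approximable F"
proof -
  have "approximable (\<lambda>x. \<Sum>y\<in>F ` space M. y * indicator (F -` {y} \<inter> space M) x)"
  proof (rule approximable_sum)
    show "finite (F ` space M)" using simple_functionD(1)[OF F] .
    fix y
    show "approximable (\<lambda>x. y * indicator (F -` {y} \<inter> space M) x)"
      by (intro approximable_scale indicators simple_functionD(2)[OF F])
    show "(\<lambda>x. y * indicator (F -` {y} \<inter> space M) x) \<in> borel_measurable M"
      using simple_functionD(2)[OF F] by simp
  qed
  moreover have "(\<Sum>y\<in>F ` space M. y * indicator (F -` {y} \<inter> space M) x) = F x" if "x \<in> space M" for x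
  proof -
    have "(\<Sum>y\<in>F ` space M. y * indicator (F -` {y} \<inter> space M) x) =
        (\<Sum>y\<in>F ` space M. indicator (F -` {y} \<inter> space M) x *\<^sub>R y)"
      by (rule sum.cong) (auto simp: indicator_def)
    also have "\<dots> = F x"
      using simple_function_indicator_representation_banach[OF F that] by (rule sym)
    finally show ?thesis .
  qed
  ultimately show ?thesis
    by (rule approximable_cong)
qed

lemma approximable_L2:
  assumes indicators: "\<And>A. A \<in> sets M \<Longrightarrow> approximable (indicator A)"
    and f: "f \<in> borel_measurable M" "integrable M (\<lambda>x. (cmod (f x))\<^sup>2)"
  shows "approximable f"
proof -
  obtain F where F: "\<And>i. simple_function M (F i)" "\<And>x. x \<in> space M \<Longrightarrow> (\<lambda>i. F i x) \<longlonglongrightarrow> f x"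
    "\<And>i x. x \<in> space M \<Longrightarrow> cmod (F i x) \<le> 2 * cmod (f x)"
    using borel_measurable_implies_sequence_metric[OF f(1), of 0] unfolding dist_norm by simp metis
  have F_meas: "F i \<in> borel_measurable M" for i
    using F(1) by (rule borel_measurable_simple_function)
  have dominated: "AE x in M. norm ((cmod (f x - F i x))\<^sup>2) \<le> 9 * (cmod (f x))\<^sup>2" for i
  proof (rule AE_I2)
    fix x assume "x \<in> space M"
    then have "cmod (f x - F i x) \<le> 3 * cmod (f x)"
      using norm_triangle_ineq4[of "f x" "F i x"] F(3)[of x i] by simp
    then have "(cmod (f x - F i x))\<^sup>2 \<le> (3 * cmod (f x))\<^sup>2"
      by (intro power_mono) auto
    then show "norm ((cmod (f x - F i x))\<^sup>2) \<le> 9 * (cmod (f x))\<^sup>2"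
      by (simp add: power_mult_distrib)
  qed
  have pointwise: "AE x in M. (\<lambda>i. (cmod (f x - F i x))\<^sup>2) \<longlonglongrightarrow> 0"
  proof (rule AE_I2)
    fix x assume "x \<in> space M"
    then have "(\<lambda>i. (cmod (f x - F i x))\<^sup>2) \<longlonglongrightarrow> (cmod (f x - f x))\<^sup>2"
      by (intro tendsto_intros F(2))
    then show "(\<lambda>i. (cmod (f x - F i x))\<^sup>2) \<longlonglongrightarrow> 0" by simp
  qed
  have meas: "(\<lambda>x. (cmod (f x - F i x))\<^sup>2) \<in> borel_measurable M" for i
    using f(1) F_meas[of i] by measurable
  have bound: "integrable M (\<lambda>x. 9 * (cmod (f x))\<^sup>2)"
    using f(2) by simp
  have lim: "(\<lambda>i. \<integral>x. (cmod (f x - F i x))\<^sup>2 \<partial>M) \<longlonglongrightarrow> 0"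
    using integral_dominated_convergence[OF _ meas bound pointwise dominated] by simp
  have int: "integrable M (\<lambda>x. (cmod (f x - F i x))\<^sup>2)" for i
    by (rule integrable_dominated_convergence2[OF _ meas bound pointwise dominated]) simp
  show ?thesis
  proof (rule approximable_trans[OF f(1)])
    fix e :: real assume "e > 0"
    then obtain i where "(\<integral>x. (cmod (f x - F i x))\<^sup>2 \<partial>M) < e"
      using order_tendstoD(2)[OF lim] by (meson eventually_sequentially order.refl)
    then show "\<exists>h\<in>borel_measurable M. approximable h \<and>
        integrable M (\<lambda>x. (cmod (f x - h x))\<^sup>2) \<and> (\<integral>x. (cmod (f x - h x))\<^sup>2 \<partial>M) < e"
      using F_meas int approximable_simple_function[OF indicators F(1)] by blast
  qed
qed

lemma approximable_imp_span_approx: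
  assumes "approximable f" "e > 0"
    and T_span: "\<And>p. p \<in> T \<Longrightarrow> \<exists>S c. finite S \<and> (\<forall>x\<in>space M. p x = (\<Sum>\<zeta>\<in>S. c \<zeta> * B \<zeta> x))"
  shows "\<exists>S c. finite S \<and> integrable M (\<lambda>x. (cmod (f x - (\<Sum>\<zeta>\<in>S. c \<zeta> * B \<zeta> x)))\<^sup>2) \<and>
           (\<integral>x. (cmod (f x - (\<Sum>\<zeta>\<in>S. c \<zeta> * B \<zeta> x)))\<^sup>2 \<partial>M) < e"
proof -
  obtain p where p: "p \<in> T" "integrable M (\<lambda>x. (cmod (f x - p x))\<^sup>2)" "(\<integral>x. (cmod (f x - p x))\<^sup>2 \<partial>M) < e"
    using assms(1,2) unfolding approximable_def by blast
  obtain S c where S: "finite S" "\<And>x. x \<in> space M \<Longrightarrow> p x = (\<Sum>\<zeta>\<in>S. c \<zeta> * B \<zeta> x)"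
    using T_span[OF p(1)] by blast
  have "integrable M (\<lambda>x. (cmod (f x - p x))\<^sup>2) =
      integrable M (\<lambda>x. (cmod (f x - (\<Sum>\<zeta>\<in>S. c \<zeta> * B \<zeta> x)))\<^sup>2)"
    and "(\<integral>x. (cmod (f x - p x))\<^sup>2 \<partial>M) = (\<integral>x. (cmod (f x - (\<Sum>\<zeta>\<in>S. c \<zeta> * B \<zeta> x)))\<^sup>2 \<partial>M)"
    by (auto simp: S(2) intro!: Bochner_Integration.integrable_cong Bochner_Integration.integral_cong)
  then show ?thesis
    using S(1) p(2,3) by auto
qed

text \<open>Uniform bounds make products of approximants converge in \<open>L\<^sup>2\<close>.\<close>

definition bounded_approximable :: "real \<Rightarrow> ('x \<Rightarrow> complex) \<Rightarrow> bool" where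
  "bounded_approximable K g \<longleftrightarrow>
     (\<forall>e>0. \<exists>p\<in>T. (\<forall>x\<in>space M. cmod (p x) \<le> K) \<and> integrable M (\<lambda>x. (cmod (g x - p x))\<^sup>2) \<and>
                  (\<integral>x. (cmod (g x - p x))\<^sup>2 \<partial>M) < e)"

lemma bounded_approximable_imp_approximable: "bounded_approximable K g \<Longrightarrow> approximable g"
  unfolding bounded_approximable_def approximable_def by blast

lemma bounded_approximable_one: "bounded_approximable 1 (\<lambda>x. 1)"
  unfolding bounded_approximable_def using one_T by force

lemma bounded_approximable_mult:
  assumes mult_T: "\<And>p p'. p \<in> T \<Longrightarrow> p' \<in> T \<Longrightarrow> (\<lambda>x. p x * p' x) \<in> T"
    and meas: "g \<in> borel_measurable M" "h \<in> borel_measurable M"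
    and g_le_1: "\<And>x. x \<in> space M \<Longrightarrow> cmod (g x) \<le> 1"
    and approx: "bounded_approximable K g" "bounded_approximable K' h"
  shows "bounded_approximable (K * K') (\<lambda>x. g x * h x)"
  unfolding bounded_approximable_def
proof (intro allI impI)
  fix e :: real assume "e > 0"
  define C where "C = 4 * (K'\<^sup>2 + 1)"
  have C: "C > 0" "4 * K'\<^sup>2 \<le> C" unfolding C_def by (auto simp: add_nonneg_pos)
  obtain p where p: "p \<in> T" "\<forall>x\<in>space M. cmod (p x) \<le> K"
    "integrable M (\<lambda>x. (cmod (g x - p x))\<^sup>2)" "(\<integral>x. (cmod (g x - p x))\<^sup>2 \<partial>M) < e / C"
    using approx(1) \<open>e > 0\<close> C(1) unfolding bounded_approximable_def by (meson divide_pos_pos)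
  obtain p' where p': "p' \<in> T" "\<forall>x\<in>space M. cmod (p' x) \<le> K'"
    "integrable M (\<lambda>x. (cmod (h x - p' x))\<^sup>2)" "(\<integral>x. (cmod (h x - p' x))\<^sup>2 \<partial>M) < e / 4"
    using approx(2) \<open>e > 0\<close> unfolding bounded_approximable_def by (meson divide_pos_pos zero_less_numeral)
  define bound where "bound x = 2 * (cmod (h x - p' x))\<^sup>2 + 2 * K'\<^sup>2 * (cmod (g x - p x))\<^sup>2" for x
  have pointwise: "(cmod (g x * h x - p x * p' x))\<^sup>2 \<le> bound x" if x: "x \<in> space M" for x
  proof -
    have "cmod (g x * (h x - p' x)) \<le> cmod (h x - p' x)"
      unfolding norm_mult using g_le_1[OF x] by (simp add: mult_left_le_one_le)
    then have 1: "(cmod (g x * (h x - p' x)))\<^sup>2 \<le> (cmod (h x - p' x))\<^sup>2"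
      by (intro power_mono) auto
    have "cmod (p' x * (g x - p x)) \<le> K' * cmod (g x - p x)"
      unfolding norm_mult using p'(2) x by (intro mult_right_mono) auto
    then have 2: "(cmod (p' x * (g x - p x)))\<^sup>2 \<le> K'\<^sup>2 * (cmod (g x - p x))\<^sup>2"
      by (metis norm_ge_zero power_mono power_mult_distrib)
    have split: "g x * h x - p x * p' x = g x * (h x - p' x) + p' x * (g x - p x)"
      by (simp add: algebra_simps)
    show ?thesis
      unfolding bound_def split using norm_add_sq_le[of "g x * (h x - p' x)" "p' x * (g x - p x)"] 1 2
      by linarith
  qed
  have int_bound: "integrable M bound"
    unfolding bound_def using p(3) p'(3) by auto
  have int: "integrable M (\<lambda>x. (cmod (g x * h x - p x * p' x))\<^sup>2)"
    using meas measurable_T[OF p(1)] measurable_T[OF p'(1)] pointwise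
    by (intro Bochner_Integration.integrable_bound[OF int_bound])
      (auto intro!: AE_I2 intro: order_trans[OF _ abs_ge_self])
  have "(\<integral>x. (cmod (g x * h x - p x * p' x))\<^sup>2 \<partial>M) \<le> (\<integral>x. bound x \<partial>M)"
    using pointwise by (intro integral_mono_AE[OF int int_bound] AE_I2)
  also have "\<dots> = 2 * (\<integral>x. (cmod (h x - p' x))\<^sup>2 \<partial>M) + 2 * K'\<^sup>2 * (\<integral>x. (cmod (g x - p x))\<^sup>2 \<partial>M)"
    unfolding bound_def using p(3) p'(3) by simp
  also have "\<dots> < e"
  proof -
    have "2 * K'\<^sup>2 * (\<integral>x. (cmod (g x - p x))\<^sup>2 \<partial>M) \<le> C / 2 * (\<integral>x. (cmod (g x - p x))\<^sup>2 \<partial>M)"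
      using C(2) by (intro mult_right_mono) auto
    also have "\<dots> < e / 2"
      using p(4) C(1) by (simp add: pos_less_divide_eq mult.commute)
    finally show ?thesis using p'(4) by simp
  qed
  finally have "(\<integral>x. (cmod (g x * h x - p x * p' x))\<^sup>2 \<partial>M) < e" .
  moreover have "\<forall>x\<in>space M. cmod (p x * p' x) \<le> K * K'"
    using p(2) p'(2) by (auto simp: norm_mult intro: mult_mono order_trans[OF norm_ge_zero])
  ultimately show "\<exists>r\<in>T. (\<forall>x\<in>space M. cmod (r x) \<le> K * K') \<and>
      integrable M (\<lambda>x. (cmod (g x * h x - r x))\<^sup>2) \<and> (\<integral>x. (cmod (g x * h x - r x))\<^sup>2 \<partial>M) < e"
    using mult_T[OF p(1) p'(1)] int by (intro bexI[of _ "\<lambda>x. p x * p' x"]) auto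
qed

end

section \<open>Trigonometric polynomials on the line\<close>

definition trig_poly :: "(complex \<times> real) list \<Rightarrow> real \<Rightarrow> complex" where
  "trig_poly cs t = (\<Sum>(c, s)\<leftarrow>cs. c * cis (s * t))"

lemma sum_list_mult_sum_list:
  "(\<Sum>a\<leftarrow>xs. f a) * (\<Sum>b\<leftarrow>ys. g b) = (\<Sum>(a, b)\<leftarrow>List.product xs ys. f a * g b :: 'r::comm_ring)"
  by (induction xs) (auto simp: algebra_simps sum_list_const_mult o_def)

lemma trig_poly_append: "trig_poly (cs @ ds) t = trig_poly cs t + trig_poly ds t"
  unfolding trig_poly_def by simp

lemma trig_poly_mult:
  "trig_poly cs t * trig_poly ds t = trig_poly (map (\<lambda>((c, s), (d, r)). (c * d, s + r)) (List.product cs ds)) t"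
  unfolding trig_poly_def sum_list_mult_sum_list
  by (simp add: o_def case_prod_unfold cis_mult[symmetric] algebra_simps)

lemma bounded_linear_complex_to_real:
  assumes "bounded_linear (f :: complex \<Rightarrow> real)"
  shows "f z = Re z * f 1 + Im z * f \<i>"
proof -
  interpret bounded_linear f by fact
  have "z = Re z *\<^sub>R 1 + Im z *\<^sub>R \<i>"
    by (simp add: complex_eq_iff)
  then have "f z = f (Re z *\<^sub>R 1 + Im z *\<^sub>R \<i>)"
    by (rule arg_cong)
  then show ?thesis by (simp add: add scale)
qed

lemma real_polynomial_function_on_circle_trig_poly:
  assumes "real_polynomial_function (g :: complex \<Rightarrow> real)"
  shows "\<exists>cs. \<forall>t. complex_of_real (g (cis (w * t))) = trig_poly cs t"
  using assms
proof (induction g rule: real_polynomial_function.induct)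
  case (linear f)
  \<comment> \<open>\<open>Re z = (z + cnj z)/2\<close> and \<open>Im z = (z - cnj z)/(2\<i>)\<close>, and \<open>cnj (cis u) = cis (- u)\<close>\<close>
  let ?cs = "[((f 1 - \<i> * f \<i>) / 2, w), ((f 1 + \<i> * f \<i>) / 2, - w)]"
  have "complex_of_real (f (cis (w * t))) = trig_poly ?cs t" for t
    unfolding trig_poly_def bounded_linear_complex_to_real[OF linear, of "cis (w * t)"]
    by (simp add: complex_eq_iff algebra_simps flip: add_divide_distrib)
  then show ?case by blast
next
  case (const c)
  have "complex_of_real c = trig_poly [(complex_of_real c, 0)] t" for t
    by (simp add: trig_poly_def)
  then show ?case by blast
next
  case (add f g)
  then obtain cs ds where "\<And>t. complex_of_real (f (cis (w * t))) = trig_poly cs t"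
    "\<And>t. complex_of_real (g (cis (w * t))) = trig_poly ds t" by blast
  then have "complex_of_real (f (cis (w * t)) + g (cis (w * t))) = trig_poly (cs @ ds) t" for t
    by (simp add: trig_poly_append)
  then show ?case by blast
next
  case (mult f g)
  then obtain cs ds where "\<And>t. complex_of_real (f (cis (w * t))) = trig_poly cs t"
    "\<And>t. complex_of_real (g (cis (w * t))) = trig_poly ds t" by blast
  then have "complex_of_real (f (cis (w * t)) * g (cis (w * t))) = trig_poly cs t * trig_poly ds t" for t
    by simp
  then show ?case unfolding trig_poly_mult by blast
qed

lemma trig_poly_uniform_approx:
  assumes "continuous_on (sphere 0 1) f" "\<epsilon> > 0"
  shows "\<exists>cs. \<forall>t. cmod (complex_of_real (f (cis (w * t))) - trig_poly cs t) < \<epsilon>"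
proof -
  obtain g where g: "polynomial_function g" "\<And>z. z \<in> sphere 0 1 \<Longrightarrow> norm (f z - g z) < \<epsilon>"
    using Stone_Weierstrass_polynomial_function[OF compact_sphere assms] by blast
  obtain cs where cs: "\<And>t. complex_of_real (g (cis (w * t))) = trig_poly cs t"
    using real_polynomial_function_on_circle_trig_poly[of g w] g(1)
    unfolding real_polynomial_function_eq by blast
  have "cmod (complex_of_real (f (cis (w * t))) - trig_poly cs t) < \<epsilon>" for t
    using g(2)[of "cis (w * t)"] by (simp flip: cs of_real_diff)
  then show ?thesis by blast
qed

lemma trig_poly_approx_step:
  assumes "0 < \<delta>" "\<bar>a\<bar> + \<delta> \<le> R" "\<epsilon> > 0"
  shows "\<exists>cs. (\<forall>t. cmod (trig_poly cs t) \<le> 1 + \<epsilon>) \<and>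
           (\<forall>t. \<bar>t\<bar> \<le> R \<longrightarrow> (t \<le> a \<or> a + \<delta> \<le> t) \<longrightarrow> cmod (indicator {..a} t - trig_poly cs t) < \<epsilon>)"
proof -
  \<comment> \<open>With \<open>w = 1/(2R)\<close> the map \<open>t \<mapsto> Im (cis (w t))\<close> is increasing on \<open>[-R, R]\<close>, so a ramp
      in \<open>Im z\<close> between \<open>s\<^sub>0 = sin (w a)\<close> and \<open>s\<^sub>1 = sin (w (a + \<delta>))\<close> is a continuous function
      on the circle that equals the step function away from \<open>(a, a + \<delta>)\<close>.\<close>
  define w where "w = 1 / (2 * R)"
  define s0 where "s0 = sin (w * a)"
  define s1 where "s1 = sin (w * (a + \<delta>))"
  define ramp where "ramp z = max 0 (min 1 ((s1 - Im z) / (s1 - s0)))" for z :: complex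
  have R: "R > 0" using assms(1,2) by linarith
  have w_bound: "\<bar>w * t\<bar> \<le> 1/2" if "\<bar>t\<bar> \<le> R" for t
    using that R unfolding w_def by (simp add: abs_mult field_simps)
  have "w > 0" unfolding w_def using R by simp
  have sin_le: "sin (w * t) \<le> sin (w * t')" if "\<bar>t\<bar> \<le> R" "\<bar>t'\<bar> \<le> R" "t \<le> t'" for t t'
    using w_bound[OF that(1)] w_bound[OF that(2)] that(3) \<open>w > 0\<close> pi_ge_two
    by (intro sin_monotone_2pi_le) (auto simp: abs_le_iff)
  have "\<bar>w * a\<bar> \<le> 1/2" "\<bar>w * (a + \<delta>)\<bar> \<le> 1/2"
    using assms(1,2) by (intro w_bound; linarith)+
  then have "s0 < s1"
    unfolding s0_def s1_def using assms(1) \<open>w > 0\<close> pi_ge_two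
    by (intro sin_monotone_2pi) (auto simp: abs_le_iff)
  have "continuous_on (sphere 0 1) ramp"
    unfolding ramp_def using \<open>s0 < s1\<close> by (intro continuous_intros) auto
  then obtain cs where cs: "\<And>t. cmod (complex_of_real (ramp (cis (w * t))) - trig_poly cs t) < \<epsilon>"
    using trig_poly_uniform_approx assms(3) by blast
  have ramp_01: "0 \<le> ramp z" "ramp z \<le> 1" for z
    unfolding ramp_def by auto
  have step: "ramp (cis (w * t)) = indicator {..a} t"
    if "\<bar>t\<bar> \<le> R" "t \<le> a \<or> a + \<delta> \<le> t" for t
  proof (cases "t \<le> a")
    case True
    then have "sin (w * t) \<le> s0"
      unfolding s0_def using that(1) assms(1,2) by (intro sin_le) auto
    then show ?thesis
      using True \<open>s0 < s1\<close> by (simp add: ramp_def field_simps)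
  next
    case False
    then have "s1 \<le> sin (w * t)"
      unfolding s1_def using that assms(1,2) by (intro sin_le) auto
    then show ?thesis
      using False \<open>s0 < s1\<close> by (simp add: ramp_def divide_nonpos_pos)
  qed
  have "cmod (trig_poly cs t) \<le> 1 + \<epsilon>" for t
    using cs[of t] ramp_01[of "cis (w * t)"] norm_triangle_ineq3[of "trig_poly cs t" "complex_of_real (ramp (cis (w * t)))"]
    by (auto simp: norm_minus_commute)
  moreover have "cmod (indicator {..a} t - trig_poly cs t) < \<epsilon>"
    if "\<bar>t\<bar> \<le> R" "t \<le> a \<or> a + \<delta> \<le> t" for t
    using cs[of t] step[OF that] by (metis of_real_indicator)
  ultimately show ?thesis by blast
qed

lemma (in prob_space) trig_poly_L2_approx_indicator:
  assumes X: "X \<in> borel_measurable M" and "e > 0"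
  shows "\<exists>cs. (\<forall>t. cmod (trig_poly cs t) \<le> 2) \<and>
     integrable M (\<lambda>x. (cmod (indicator {..a} (X x) - trig_poly cs (X x)))\<^sup>2) \<and>
     (\<integral>x. (cmod (indicator {..a} (X x) - trig_poly cs (X x)))\<^sup>2 \<partial>M) < e"
proof -
  \<comment> \<open>Outside a set of small probability, where \<open>X\<close> is large or just above \<open>a\<close>, the indicator
      is uniformly approximated by \<open>trig_poly_approx_step\<close>.\<close>
  obtain n where n: "measure M {x\<in>space M. real n < \<bar>X x\<bar>} < e / 36"
  proof (atomize_elim, rule ex_measure_decseq_less)
    show "(\<Inter>n. {x\<in>space M. real n < \<bar>X x\<bar>}) = {}"
      by auto (meson reals_Archimedean2 less_asym)
  qed (use X \<open>e > 0\<close> in \<open>auto simp: decseq_def\<close>)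
  obtain k where k: "measure M {x\<in>space M. a < X x \<and> X x < a + 1 / (real k + 1)} < e / 36"
  proof (atomize_elim, rule ex_measure_decseq_less)
    show "decseq (\<lambda>k. {x\<in>space M. a < X x \<and> X x < a + 1 / (real k + 1)})"
      unfolding decseq_def by (auto elim!: less_le_trans simp: frac_le)
    show "(\<Inter>k. {x\<in>space M. a < X x \<and> X x < a + 1 / (real k + 1)}) = {}"
    proof (rule ccontr)
      assume "(\<Inter>k. {x\<in>space M. a < X x \<and> X x < a + 1 / (real k + 1)}) \<noteq> {}"
      then obtain x where x: "\<And>k. a < X x \<and> X x < a + 1 / (real k + 1)" by auto
      then obtain k where "inverse (real (Suc k)) < X x - a"
        using reals_Archimedean[of "X x - a"] by auto
      with x[of k] show False by (simp add: field_simps)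
    qed
  qed (use X \<open>e > 0\<close> in auto)
  define \<delta> where "\<delta> = 1 / (real k + 1)"
  define R where "R = real n + \<bar>a\<bar> + 1"
  define \<epsilon> where "\<epsilon> = min 1 (sqrt (e / 4))"
  have "0 < \<delta>" "\<delta> \<le> 1" "\<epsilon> > 0" "\<epsilon> \<le> 1"
    unfolding \<delta>_def \<epsilon>_def using \<open>e > 0\<close> by auto
  then have "\<bar>a\<bar> + \<delta> \<le> R"
    unfolding R_def by linarith
  have "\<epsilon> \<le> sqrt (e / 4)"
    unfolding \<epsilon>_def by simp
  then have "\<epsilon>\<^sup>2 \<le> (sqrt (e / 4))\<^sup>2"
    using \<open>\<epsilon> > 0\<close> by (simp add: power_mono)
  then have "\<epsilon>\<^sup>2 \<le> e / 4"
    using \<open>e > 0\<close> by simp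
  obtain cs where cs_bound: "\<And>t. cmod (trig_poly cs t) \<le> 1 + \<epsilon>"
    and cs_close: "\<And>t. \<bar>t\<bar> \<le> R \<Longrightarrow> t \<le> a \<or> a + \<delta> \<le> t \<Longrightarrow> cmod (indicator {..a} t - trig_poly cs t) < \<epsilon>"
    using trig_poly_approx_step[OF \<open>0 < \<delta>\<close> \<open>\<bar>a\<bar> + \<delta> \<le> R\<close> \<open>\<epsilon> > 0\<close>] by blast
  define bad where "bad = {x\<in>space M. real n < \<bar>X x\<bar>} \<union> {x\<in>space M. a < X x \<and> X x < a + \<delta>}"
  have bad: "bad \<in> sets M" "measure M bad < e / 18"
  proof -
    show "bad \<in> sets M"
      unfolding bad_def using X by measurable
    have "measure M bad \<le> measure M {x\<in>space M. real n < \<bar>X x\<bar>} + measure M {x\<in>space M. a < X x \<and> X x < a + \<delta>}"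
      unfolding bad_def using X by (intro measure_Un_le) auto
    then show "measure M bad < e / 18"
      using n k unfolding \<delta>_def by linarith
  qed
  define err where "err x = (cmod (indicator {..a} (X x) - trig_poly cs (X x)))\<^sup>2" for x
  have err_le: "err x \<le> 9 * indicator bad x + \<epsilon>\<^sup>2" if "x \<in> space M" for x
  proof (cases "x \<in> bad")
    case True
    have "cmod (indicator {..a} (X x) :: complex) \<le> 1"
      by (simp add: indicator_def)
    then have "cmod (indicator {..a} (X x) - trig_poly cs (X x)) \<le> 1 + (1 + \<epsilon>)"
      using norm_triangle_ineq4[of "indicator {..a} (X x)" "trig_poly cs (X x)"] cs_bound[of "X x"]
      by linarith
    then have "err x \<le> 3\<^sup>2"
      unfolding err_def using \<open>\<epsilon> \<le> 1\<close> by (intro power_mono) auto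
    then show ?thesis using True by (simp add: add_increasing2)
  next
    case False
    then have "\<bar>X x\<bar> \<le> R" "X x \<le> a \<or> a + \<delta> \<le> X x"
      using that unfolding bad_def R_def by auto
    then have "err x \<le> \<epsilon>\<^sup>2"
      unfolding err_def using cs_close by (intro power_mono) (auto simp: less_imp_le)
    then show ?thesis using False by simp
  qed
  have int_bound: "integrable M (\<lambda>x. 9 * indicator bad x + \<epsilon>\<^sup>2)"
    using bad(1) by (intro Bochner_Integration.integrable_add integrable_mult_right) (auto simp: less_top[symmetric])
  have meas: "err \<in> borel_measurable M"
  proof -
    have "(\<lambda>x. trig_poly cs (X x)) \<in> borel_measurable M"
      unfolding trig_poly_def by (induction cs) (use X in \<open>auto simp: cis_conv_exp\<close>)
    then show ?thesis unfolding err_def using X by measurable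
  qed
  have int: "integrable M err"
    using err_le by (intro Bochner_Integration.integrable_bound[OF int_bound meas] AE_I2)
      (auto simp: err_def)
  have "integral\<^sup>L M err \<le> (\<integral>x. 9 * indicator bad x + \<epsilon>\<^sup>2 \<partial>M)"
    using err_le by (intro integral_mono_AE[OF int int_bound] AE_I2)
  also have "\<dots> = 9 * measure M bad + \<epsilon>\<^sup>2"
    using bad(1) by (simp add: prob_space less_top[symmetric])
  also have "\<dots> < e"
    using bad(2) \<open>\<epsilon>\<^sup>2 \<le> e / 4\<close> \<open>e > 0\<close> by linarith
  finally have "integral\<^sup>L M err < e" .
  moreover have "cmod (trig_poly cs t) \<le> 2" for t
    using cs_bound[of t] \<open>\<epsilon> \<le> 1\<close> by linarith
  ultimately show ?thesis
    using int unfolding err_def by auto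
qed

section \<open>Probability measures on the cylinder \<open>\<sigma>\<close>-algebra of \<open>Q\<close>-hat\<close>

definition char_poly :: "(complex \<times> ('q::real_normed_vector \<Rightarrow>\<^sub>L real)) list \<Rightarrow> (('q \<Rightarrow>\<^sub>L real) \<Rightarrow> real) \<Rightarrow> complex" where
  "char_poly cs x = (\<Sum>(c, l)\<leftarrow>cs. c * cis (x l))"

definition char_polys :: "((('q::real_normed_vector \<Rightarrow>\<^sub>L real) \<Rightarrow> real) \<Rightarrow> complex) set" where
  "char_polys = {g. \<exists>cs. \<forall>x\<in>Qhat. g x = char_poly cs x}"

definition polyhedral_cylinder :: "(('q::real_normed_vector \<Rightarrow>\<^sub>L real) \<times> real) set \<Rightarrow> (('q \<Rightarrow>\<^sub>L real) \<Rightarrow> real) set" where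
  "polyhedral_cylinder F = {x\<in>Qhat. \<forall>(l, a)\<in>F. x l \<le> a}"

lemma char_poly_append: "char_poly (cs @ ds) x = char_poly cs x + char_poly ds x"
  unfolding char_poly_def by simp

lemma char_poly_scale: "char_poly (map (\<lambda>(a, l). (c * a, l)) cs) x = c * char_poly cs x"
  by (induction cs) (auto simp: char_poly_def algebra_simps)

lemma char_poly_mult:
  assumes "linear x"
  shows "char_poly cs x * char_poly ds x = char_poly (map (\<lambda>((c, l), (d, l')). (c * d, l + l')) (List.product cs ds)) x"
  unfolding char_poly_def sum_list_mult_sum_list
  by (simp add: o_def case_prod_unfold cis_mult linear_add[OF assms] algebra_simps)

lemma char_poly_trig_poly:
  assumes "linear x"
  shows "char_poly (map (\<lambda>(c, s). (c, s *\<^sub>R l)) cs) x = trig_poly cs (x l)"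
  by (induction cs) (auto simp: char_poly_def trig_poly_def linear_scale[OF assms] mult.commute)

lemma indicator_polyhedral_cylinder:
  assumes "finite F" "x \<in> Qhat"
  shows "indicator (polyhedral_cylinder F) x = (\<Prod>(l, a)\<in>F. indicator {..a} (x l) :: 'a::comm_semiring_1)"
  using assms(1)
proof (induction F rule: finite_induct)
  case empty
  then show ?case by (simp add: polyhedral_cylinder_def assms(2))
next
  case (insert p F)
  obtain l a where p: "p = (l, a)" by force
  have "polyhedral_cylinder (insert p F) = {y. y l \<le> a} \<inter> polyhedral_cylinder F"
    by (auto simp: polyhedral_cylinder_def p)
  then have "indicator (polyhedral_cylinder (insert p F)) x =
      indicator {..a} (x l) * (indicator (polyhedral_cylinder F) x :: 'a)"
    by (simp add: indicator_inter_arith indicator_def)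
  then show ?case
    using insert by (simp add: p)
qed

locale cylinder_prob_space = prob_space M for M :: "(('q::real_normed_vector \<Rightarrow>\<^sub>L real) \<Rightarrow> real) measure" +
  assumes space_M: "space M = Qhat" and sets_M: "sets M = sigma_sets Qhat Qhat_cyl"
begin

lemma measurable_eval [measurable]: "(\<lambda>x. x l) \<in> borel_measurable M"
proof (rule measurableI)
  fix B :: "real set" assume "B \<in> sets borel"
  then have "{x\<in>Qhat. x l \<in> B} \<in> sets M"
    unfolding sets_M Qhat_cyl_def by (intro sigma_sets.Basic) blast
  moreover have "(\<lambda>x. x l) -` B \<inter> space M = {x\<in>Qhat. x l \<in> B}"
    by (auto simp: space_M)
  ultimately show "(\<lambda>x. x l) -` B \<inter> space M \<in> sets M" by simp
qed simp

lemma measurable_char_poly: "char_poly cs \<in> borel_measurable M"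
  unfolding char_poly_def by (induction cs) (auto simp: cis_conv_exp)

sublocale l2_approx M char_polys
proof
  fix g :: "(('q \<Rightarrow>\<^sub>L real) \<Rightarrow> real) \<Rightarrow> complex" assume "g \<in> char_polys"
  then obtain cs where "\<forall>x\<in>Qhat. g x = char_poly cs x" unfolding char_polys_def by blast
  then show "g \<in> borel_measurable M"
    using measurable_cong[of M g "char_poly cs"] measurable_char_poly[of cs] by (simp add: space_M)
next
  fix g h :: "(('q \<Rightarrow>\<^sub>L real) \<Rightarrow> real) \<Rightarrow> complex" assume "g \<in> char_polys" "h \<in> char_polys"
  then obtain cs ds where "\<forall>x\<in>Qhat. g x = char_poly cs x" "\<forall>x\<in>Qhat. h x = char_poly ds x"
    unfolding char_polys_def by blast
  then show "(\<lambda>x. g x + h x) \<in> char_polys"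
    unfolding char_polys_def by (auto simp: char_poly_append intro!: exI[of _ "cs @ ds"])
next
  fix g :: "(('q \<Rightarrow>\<^sub>L real) \<Rightarrow> real) \<Rightarrow> complex" and c assume "g \<in> char_polys"
  then obtain cs where "\<forall>x\<in>Qhat. g x = char_poly cs x" unfolding char_polys_def by blast
  then show "(\<lambda>x. c * g x) \<in> char_polys"
    unfolding char_polys_def by (auto simp: char_poly_scale intro!: exI[of _ "map (\<lambda>(a, l). (c * a, l)) cs"])
next
  show "(\<lambda>x. 1) \<in> char_polys"
    unfolding char_polys_def
    by (auto simp: char_poly_def Qhat_def linear_0 intro!: exI[of _ "[(1, 0)]"])
qed

lemma mult_char_polys:
  assumes "g \<in> char_polys" "h \<in> char_polys"
  shows "(\<lambda>x. g x * h x) \<in> char_polys"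
proof -
  obtain cs ds where "\<forall>x\<in>Qhat. g x = char_poly cs x" "\<forall>x\<in>Qhat. h x = char_poly ds x"
    using assms unfolding char_polys_def by blast
  then show ?thesis
    unfolding char_polys_def
    by (auto simp: Qhat_def char_poly_mult intro!: exI[of _ "map (\<lambda>((c, l), (d, l')). (c * d, l + l')) (List.product cs ds)"])
qed

lemma bounded_approximable_half_space: "bounded_approximable 2 (\<lambda>x. indicator {..a} (x l))"
  unfolding bounded_approximable_def
proof (intro allI impI)
  fix e :: real assume "e > 0"
  then obtain cs where "\<forall>t. cmod (trig_poly cs t) \<le> 2"
    "integrable M (\<lambda>x. (cmod (indicator {..a} (x l) - trig_poly cs (x l)))\<^sup>2)"
    "(\<integral>x. (cmod (indicator {..a} (x l) - trig_poly cs (x l)))\<^sup>2 \<partial>M) < e"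
    using trig_poly_L2_approx_indicator[OF measurable_eval] by blast
  moreover have "(\<lambda>x. trig_poly cs (x l)) \<in> char_polys"
    unfolding char_polys_def Qhat_def
    by (auto simp: char_poly_trig_poly intro!: exI[of _ "map (\<lambda>(c, s). (c, s *\<^sub>R l)) cs"])
  ultimately show "\<exists>p\<in>char_polys. (\<forall>x\<in>space M. cmod (p x) \<le> 2) \<and>
      integrable M (\<lambda>x. (cmod (indicator {..a} (x l) - p x))\<^sup>2) \<and>
      (\<integral>x. (cmod (indicator {..a} (x l) - p x))\<^sup>2 \<partial>M) < e"
    by (intro bexI[of _ "\<lambda>x. trig_poly cs (x l)"]) auto
qed

lemma approximable_polyhedral_cylinder:
  assumes "finite F"
  shows "approximable (indicator (polyhedral_cylinder F))"
proof -
  have "bounded_approximable (2 ^ card F) (\<lambda>x. \<Prod>(l, a)\<in>F. indicator {..a} (x l))"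
    using assms
  proof (induction F rule: finite_induct)
    case empty
    then show ?case using bounded_approximable_one by simp
  next
    case (insert p F)
    obtain l a where p: "p = (l, a)" by force
    have "bounded_approximable (2 * 2 ^ card F)
        (\<lambda>x. indicator {..a} (x l) * (\<Prod>(l, a)\<in>F. indicator {..a} (x l)))"
      by (intro bounded_approximable_mult mult_char_polys bounded_approximable_half_space insert.IH)
        (auto simp: indicator_def)
    then show ?case using insert p by simp
  qed
  then show ?thesis
    by (rule bounded_approximable_imp_approximable[THEN approximable_cong])
      (simp add: indicator_polyhedral_cylinder[OF assms] space_M)
qed

lemma sets_eq_sigma_polyhedral_cylinders:
  "sets M = sigma_sets (space M) {polyhedral_cylinder F | F. finite F}"
proof -
  let ?G = "{polyhedral_cylinder F | F. finite F} :: (('q \<Rightarrow>\<^sub>L real) \<Rightarrow> real) set set"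
  have G_Qhat: "?G \<subseteq> Pow Qhat"
    unfolding polyhedral_cylinder_def by auto
  have cylinder_sets: "polyhedral_cylinder F \<in> sets M" if "finite F" for F
    using that
  proof (induction F rule: finite_induct)
    case empty
    then show ?case by (simp add: polyhedral_cylinder_def flip: space_M)
  next
    case (insert p F)
    have "polyhedral_cylinder (insert p F) = {x\<in>space M. x (fst p) \<le> snd p} \<inter> polyhedral_cylinder F"
      by (auto simp: polyhedral_cylinder_def space_M)
    then show ?case using insert.IH by auto
  qed
  have "?G \<subseteq> sigma_sets Qhat Qhat_cyl"
    using cylinder_sets unfolding sets_M by blast
  then have "sigma_sets Qhat ?G \<subseteq> sigma_sets Qhat Qhat_cyl"
    by (rule sigma_sets_mono)
  moreover have "sigma_sets Qhat Qhat_cyl \<subseteq> sigma_sets Qhat ?G"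
  proof (rule sigma_sets_mono, rule subsetI)
    fix A :: "(('q \<Rightarrow>\<^sub>L real) \<Rightarrow> real) set"
    assume "A \<in> Qhat_cyl"
    then obtain l B where A: "A = {x\<in>Qhat. x l \<in> B}" "B \<in> sets borel"
      unfolding Qhat_cyl_def by blast
    define N where "N = sigma Qhat ?G"
    have space_N: "space N = Qhat" and sets_N: "sets N = sigma_sets Qhat ?G"
      unfolding N_def using G_Qhat by (auto simp: space_measure_of sets_measure_of)
    have "{x\<in>space N. x l \<le> y} = polyhedral_cylinder {(l, y)}" for y
      by (auto simp: polyhedral_cylinder_def space_N)
    then have "(\<lambda>x. x l) \<in> borel_measurable N"
      by (intro borel_measurableI_le) (auto simp: sets_N intro!: sigma_sets.Basic)
    moreover have "(\<lambda>x. x l) -` B \<inter> space N = A"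
      by (auto simp: A space_N)
    ultimately show "A \<in> sigma_sets Qhat ?G"
      using measurable_sets[OF _ A(2)] sets_N by metis
  qed
  ultimately show ?thesis
    by (simp add: sets_M space_M)
qed

theorem approximable_L2_char_polys:
  assumes "f \<in> borel_measurable M" "integrable M (\<lambda>x. (cmod (f x))\<^sup>2)"
  shows "approximable f"
proof (rule approximable_L2[OF _ assms])
  let ?G = "{polyhedral_cylinder F | F. finite F} :: (('q \<Rightarrow>\<^sub>L real) \<Rightarrow> real) set set"
  have "Int_stable ?G"
  proof (rule Int_stableI)
    fix A B assume "A \<in> ?G" "B \<in> ?G"
    then obtain F F' where "A = polyhedral_cylinder F" "B = polyhedral_cylinder F'" "finite F" "finite F'"
      by blast
    then have "A \<inter> B = polyhedral_cylinder (F \<union> F')" "finite (F \<union> F')"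
      by (auto simp: polyhedral_cylinder_def)
    then show "A \<inter> B \<in> ?G" by blast
  qed
  moreover have "?G \<subseteq> Pow (space M)"
    by (auto simp: polyhedral_cylinder_def space_M)
  moreover have "approximable (indicator C)" if "C \<in> ?G" for C
    using that approximable_polyhedral_cylinder by blast
  ultimately show "approximable (indicator A)" if "A \<in> sets M" for A
    using approximable_indicator_sigma[OF _ _ sets_eq_sigma_polyhedral_cylinders _ that] by blast
qed

end

section \<open>Coherent states as characters\<close>

lemma sum_regroup_by_image:
  fixes k :: "'i \<Rightarrow> 'a::semiring_0"
  assumes "finite I"
  shows "(\<Sum>i\<in>I. k i * B (g i)) = (\<Sum>\<zeta>\<in>g ` I. (\<Sum>i\<in>{i\<in>I. g i = \<zeta>}. k i) * B \<zeta>)"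
proof -
  have "(\<Sum>i\<in>I. k i * B (g i)) = (\<Sum>\<zeta>\<in>g ` I. \<Sum>i\<in>{i\<in>I. g i = \<zeta>}. k i * B (g i))"
    using assms by (rule sum.image_gen)
  also have "\<dots> = (\<Sum>\<zeta>\<in>g ` I. (\<Sum>i\<in>{i\<in>I. g i = \<zeta>}. k i) * B \<zeta>)"
    by (intro sum.cong refl) (simp add: sum_distrib_right)
  finally show ?thesis .
qed

lemma char_poly_in_span:
  fixes B :: "'z \<Rightarrow> (('q::real_normed_vector \<Rightarrow>\<^sub>L real) \<Rightarrow> real) \<Rightarrow> complex"
  assumes "\<And>l. \<exists>\<zeta> c. c \<noteq> 0 \<and> (\<forall>x\<in>Qhat. B \<zeta> x = c * cis (x l))"
  shows "\<exists>S a. finite S \<and> (\<forall>x\<in>Qhat. char_poly cs x = (\<Sum>\<zeta>\<in>S. a \<zeta> * B \<zeta> x))"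
proof -
  have "\<forall>l. \<exists>\<zeta> c. c \<noteq> 0 \<and> (\<forall>x\<in>Qhat. B \<zeta> x = c * cis (x l))"
    using assms by blast
  then obtain Z where "\<forall>l. \<exists>c. c \<noteq> 0 \<and> (\<forall>x\<in>Qhat. B (Z l) x = c * cis (x l))"
    by (rule choice[THEN exE])
  then obtain C where "\<forall>l. C l \<noteq> 0 \<and> (\<forall>x\<in>Qhat. B (Z l) x = C l * cis (x l))"
    by (rule choice[THEN exE])
  then have ZC: "\<And>l. C l \<noteq> 0" "\<And>l x. x \<in> Qhat \<Longrightarrow> B (Z l) x = C l * cis (x l)"
    by auto
  define k where "k i = fst (cs ! i) / C (snd (cs ! i))" for i
  define g where "g i = Z (snd (cs ! i))" for i
  define a where "a \<zeta> = (\<Sum>i\<in>{i\<in>{0..<length cs}. g i = \<zeta>}. k i)" for \<zeta>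
  have "(\<Sum>i\<in>{0..<length cs}. k i * B (g i) x) = (\<Sum>\<zeta>\<in>g ` {0..<length cs}. a \<zeta> * B \<zeta> x)" for x
    unfolding a_def by (rule sum_regroup_by_image) simp
  moreover have "char_poly cs x = (\<Sum>i\<in>{0..<length cs}. k i * B (g i) x)" if "x \<in> Qhat" for x
  proof -
    have "char_poly cs x = (\<Sum>i\<in>{0..<length cs}. fst (cs ! i) * cis (x (snd (cs ! i))))"
      unfolding char_poly_def sum_list_sum_nth by (simp add: case_prod_unfold)
    also have "\<dots> = (\<Sum>i\<in>{0..<length cs}. k i * B (g i) x)"
      unfolding k_def g_def using ZC that by simp
    finally show ?thesis .
  qed
  ultimately show ?thesis
    by (intro exI[of _ "g ` {0..<length cs}"] exI[of _ a]) auto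
qed

lemma vsub_eqI:
  assumes "affine_action vadd" "vadd p u = p'"
  shows "vsub vadd p' p = u"
  using assms unfolding affine_action_def vsub_def by (intro the1_equality) auto

lemma ex_Mset_brQ_eq:
  assumes br: "bilinear br"
    and dirsum: "\<forall>\<xi>. \<exists>m\<in>Mset br. \<exists>n\<in>Nset br. \<xi> = m + n"
    and brQ_all: "\<forall>f :: 'q::real_normed_vector \<Rightarrow> real. linear f \<and> continuous_on UNIV f \<longrightarrow>
                    (\<exists>\<xi>. \<forall>\<phi>. f \<phi> = brQ br q \<xi> \<phi>)"
    and "bounded_linear f"
  shows "\<exists>m\<in>Mset br. brQ br q m = f"
proof -
  obtain \<xi> where \<xi>: "\<And>\<phi>. f \<phi> = brQ br q \<xi> \<phi>"
    using brQ_all \<open>bounded_linear f\<close> by (meson bounded_linear.linear linear_continuous_on)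
  obtain m n where mn: "m \<in> Mset br" "n \<in> Nset br" "\<xi> = m + n"
    using dirsum by blast
  have "brQ br q \<xi> = brQ br q m"
    using mn(2) unfolding brQ_def mn(3) bilinear_ladd[OF br] Nset_def by auto
  then show ?thesis
    using mn(1) \<xi> by (intro bexI[of _ m]) auto
qed

lemma betahat_character:
  fixes vadd :: "'a \<Rightarrow> 'l::real_vector \<Rightarrow> 'a"
    and q :: "'l \<Rightarrow> 'q::real_inner"
    and \<Omega> :: "'q \<Rightarrow> 'q \<Rightarrow> complex"
  assumes aff: "affine_action vadd"
    and br: "bilinear br"
    and dirsum: "\<forall>\<xi>. \<exists>m\<in>Mset br. \<exists>n\<in>Nset br. \<xi> = m + n"
    and ker_q: "\<forall>\<tau>. q \<tau> = 0 \<longleftrightarrow> \<tau> \<in> Mset br"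
    and \<Omega>: "bilinear \<Omega>"
    and brQ_all: "\<forall>f :: 'q \<Rightarrow> real. linear f \<and> continuous_on UNIV f \<longrightarrow>
                    (\<exists>\<xi>. \<forall>\<phi>. f \<phi> = brQ br q \<xi> \<phi>)"
  shows "\<exists>\<zeta> c. c \<noteq> 0 \<and> (\<forall>x\<in>Qhat. betahat vadd \<theta> br q \<Omega> \<zeta> \<eta> x = c * cis (x l))"
proof -
  obtain m where m: "m \<in> Mset br" "brQ br q m = (\<lambda>\<phi>. - blinfun_apply l \<phi>)"
    using ex_Mset_brQ_eq[OF br dirsum brQ_all, of "\<lambda>\<phi>. - blinfun_apply l \<phi>"]
    by (auto intro: bounded_linear_minus blinfun.bounded_linear_right)
  define \<zeta> where "\<zeta> = vadd \<eta> (- m)"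
  have vsub: "vsub vadd \<eta> \<zeta> = m"
    using aff unfolding \<zeta>_def by (intro vsub_eqI) (auto simp: affine_action_def)
  have "q m = 0"
    using ker_q m(1) by simp
  have Blinfun_neg: "Blinfun (\<lambda>\<phi>. - blinfun_apply l \<phi>) = - l"
    by (rule blinfun_eqI)
      (simp add: bounded_linear_Blinfun_apply bounded_linear_minus blinfun.bounded_linear_right uminus_blinfun.rep_eq)
  have Blinfun_zero: "Blinfun (\<lambda>_. 0) = (0 :: 'q \<Rightarrow>\<^sub>L real)"
    by (rule blinfun_eqI) (simp add: bounded_linear_Blinfun_apply)
  then have Blinfun_inner_zero: "Blinfun (inner 0) = (0 :: 'q \<Rightarrow>\<^sub>L real)"
    by (simp add: inner_zero_left[abs_def])
  have "betahat vadd \<theta> br q \<Omega> \<zeta> \<eta> x = exp (\<i> * \<theta> \<zeta> m + \<i> * x l)" if "linear x" for x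
    unfolding betahat_def Let_def vsub \<open>q m = 0\<close> m(2) Blinfun_neg
    using that by (simp add: bilinear_lzero[OF \<Omega>] Blinfun_zero Blinfun_inner_zero linear_0 linear_neg)
  then have "betahat vadd \<theta> br q \<Omega> \<zeta> \<eta> x = cis (\<theta> \<zeta> m) * cis (x l)" if "linear x" for x
    using that by (simp add: cis_conv_exp exp_add)
  then show ?thesis
    unfolding Qhat_def by (intro exI[of _ \<zeta>] exI[of _ "cis (\<theta> \<zeta> m)"]) auto
qed

theorem proposition4p4:
  fixes vadd :: "'a \<Rightarrow> 'l::real_vector \<Rightarrow> 'a"
    and \<theta> :: "'a \<Rightarrow> 'l \<Rightarrow> real"
    and br :: "'l \<Rightarrow> 'l \<Rightarrow> real"
    and q :: "'l \<Rightarrow> 'q::{real_inner, polish_space}"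
    and \<Omega> :: "'q \<Rightarrow> 'q \<Rightarrow> complex"
    and \<nu> :: "(('q \<Rightarrow>\<^sub>L real) \<Rightarrow> real) measure"
    and \<eta> :: 'a
  assumes aff: "affine_action vadd"
    and theta_lin: "\<forall>\<zeta>. linear (\<theta> \<zeta>)"
    and br_bilin: "bilinear br"
    and theta_shift: "\<forall>\<eta>' \<xi> \<tau>. \<theta> (vadd \<eta>' \<xi>) \<tau> = \<theta> \<eta>' \<tau> + br \<xi> \<tau>"
    and omega_nondeg: "\<forall>\<xi>. (\<forall>\<xi>'. omega br \<xi> \<xi>' = 0) \<longrightarrow> \<xi> = 0"
    and dirsum: "Mset br \<inter> Nset br = {0}"
                "\<forall>\<xi>. \<exists>m\<in>Mset br. \<exists>n\<in>Nset br. \<xi> = m + n"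
    and q_quot: "linear q" "surj q" "\<forall>\<tau>. q \<tau> = 0 \<longleftrightarrow> \<tau> \<in> Mset br"
    and Omega_bilin: "bilinear \<Omega>"
    and Omega_sym: "\<forall>\<phi> \<psi>. \<Omega> \<phi> \<psi> = \<Omega> \<psi> \<phi>"
    and Re_Omega: "\<forall>\<phi> \<psi>. Re (\<Omega> \<phi> \<psi>) = inner \<phi> \<psi>"
    and Im_Omega_cont: "continuous_on UNIV (\<lambda>(\<phi>, \<psi>). Im (\<Omega> \<phi> \<psi>))"
    and brQ_cont: "\<forall>\<xi>. continuous_on UNIV (brQ br q \<xi>)"
    and brQ_all: "\<forall>f :: 'q \<Rightarrow> real. linear f \<and> continuous_on UNIV f \<longrightarrow>
                    (\<exists>\<xi>. \<forall>\<phi>. f \<phi> = brQ br q \<xi> \<phi>)"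
    and nu_space: "space \<nu> = Qhat"
    and nu_sets: "sets \<nu> = sigma_sets Qhat Qhat_cyl"
    and nu_prob: "prob_space \<nu>"
    and nu_char: "\<forall>l :: 'q \<Rightarrow>\<^sub>L real.
                    (\<integral>x. exp (\<i> * of_real (x l)) \<partial>\<nu>) = of_real (exp (- (norm l)\<^sup>2 / 4))"
  shows "\<forall>f \<in> borel_measurable \<nu>. integrable \<nu> (\<lambda>x. (cmod (f x))\<^sup>2) \<longrightarrow>
           (\<forall>e > 0. \<exists>S c. finite S \<and>
              integrable \<nu> (\<lambda>x. (cmod (f x - (\<Sum>\<zeta>\<in>S. c \<zeta> * betahat vadd \<theta> br q \<Omega> \<zeta> \<eta> x)))\<^sup>2) \<and>
              (\<integral>x. (cmod (f x - (\<Sum>\<zeta>\<in>S. c \<zeta> * betahat vadd \<theta> br q \<Omega> \<zeta> \<eta> x)))\<^sup>2 \<partial>\<nu>) < e)"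
proof -
  interpret cylinder_prob_space \<nu>
    using nu_prob nu_space nu_sets by (simp add: cylinder_prob_space_def cylinder_prob_space_axioms_def)
  have characters: "\<exists>\<zeta> c. c \<noteq> 0 \<and> (\<forall>x\<in>Qhat. betahat vadd \<theta> br q \<Omega> \<zeta> \<eta> x = c * cis (x l))" for l
    by (rule betahat_character[OF aff br_bilin dirsum(2) q_quot(3) Omega_bilin brQ_all])
  have span: "\<exists>S c. finite S \<and> (\<forall>x\<in>space \<nu>. p x = (\<Sum>\<zeta>\<in>S. c \<zeta> * betahat vadd \<theta> br q \<Omega> \<zeta> \<eta> x))"
    if p: "p \<in> char_polys" for p
  proof -
    obtain cs where "\<forall>x\<in>Qhat. p x = char_poly cs x"
      using p unfolding char_polys_def by blast
    moreover obtain S c where "finite S"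
      "\<forall>x\<in>Qhat. char_poly cs x = (\<Sum>\<zeta>\<in>S. c \<zeta> * betahat vadd \<theta> br q \<Omega> \<zeta> \<eta> x)"
      using char_poly_in_span[OF characters] by blast
    ultimately show ?thesis
      unfolding nu_space by auto
  qed
  show ?thesis
    using approximable_imp_span_approx[OF approximable_L2_char_polys _ span] by blast
qed

end
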